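(* Let $C$ be pre-treatment covariates, and let $M_0,M_1$ and $Y_0,Y_1$ be the counterfactual mediators and outcomes without and with treatment. (a) If $I$ and $I'$ are both organic interventions with respect to $C$, then $E(Y_{1,I=1})=E(Y_{1,I'=1})$; hence the organic direct effect $E(Y_{1,I=1})-E(Y_0)$ and the organic indirect effect $E(Y_1)-E(Y_{1,I=1})$ do not depend on the choice of organic intervention with respect to $C$. (b) Let $C$ and $\tilde C$ be two sets of pre-treatment common causes of mediator and outcome such that $C$ is not a common cause of mediator and outcome given $\tilde C$, and $\tilde C$ is not a common cause of mediator and outcome given $C$. If $I^C$ is an organic intervention with respect to $C$ and $I^{\tilde C}$ is an organic intervention with respect to $\tilde C$, then $E(Y_{1,I^C=1})=E(Y_{1,I^{\tilde C}=1})$, so the organic direct and indirect effects based on $I^C$ and on $I^{\tilde C}$ coincide.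
   Context: For an intervention $I$ on the mediator applied together with treatment $A=1$, $M_{1,I=1}$ and $Y_{1,I=1}$ denote the mediator and outcome under treatment combined with $I$. An intervention $I$ is organic with respect to a set of covariates $C$ if (1) for all $c$, $M_{1,I=1}\mid C=c$ has the same distribution as $M_0\mid C=c$, and (2) for all $m,c$, $Y_{1,I=1}\mid M_{1,I=1}=m, C=c$ has the same distribution as $Y_1\mid M_1=m, C=c$. Organic direct effect: $E(Y_{1,I=1})-E(Y_0)$; organic indirect effect: $E(Y_1)-E(Y_{1,I=1})$. A variable $X$ is not a common cause of mediator and outcome given $C$ if either ($X\perp\!\!\!\perp M_0\mid C$ and $X\perp\!\!\!\perp M_1\mid C$) or $X\perp\!\!\!\perp Y_1\mid M_1, C$. Variables have (conditional) densities so that all conditional distributions and expectations used are well defined.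
   Formalization: Part (b) assumes the law of ($M_0$, C, $\tilde C$) absolutely continuous with respect to the law of ($M_1$, C, $\tilde C$), and part (a) likewise for ($M_0$, C) and ($M_1$, C). The statement above fails without it. *)

theory Defs
  imports "HOL-Probability.Probability"
begin

definition cond_distr_kernel ::
  "'a measure \<Rightarrow> ('a \<Rightarrow> 'z) \<Rightarrow> 'z measure \<Rightarrow> ('a \<Rightarrow> 'x) \<Rightarrow> 'x measure \<Rightarrow> ('z \<Rightarrow> 'x measure) \<Rightarrow> bool"
where
  "cond_distr_kernel P Z MZ X MX K \<longleftrightarrow>
     K \<in> MZ \<rightarrow>\<^sub>M prob_algebra MX \<and>
     (\<forall>A\<in>sets MZ. \<forall>B\<in>sets MX.
        measure P {\<omega> \<in> space P. Z \<omega> \<in> A \<and> X \<omega> \<in> B} =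
        (\<integral>\<omega>. indicator A (Z \<omega>) * measure (K (Z \<omega>)) B \<partial>P))"

text \<open>For all z, the distribution of X given Z = z equals the distribution of X' given Z' = z:
  there is a common conditional distribution kernel.\<close>
definition same_cond_distr ::
  "'a measure \<Rightarrow> ('a \<Rightarrow> 'z) \<Rightarrow> ('a \<Rightarrow> 'x) \<Rightarrow> ('a \<Rightarrow> 'z) \<Rightarrow> ('a \<Rightarrow> 'x) \<Rightarrow> 'z measure \<Rightarrow> 'x measure \<Rightarrow> bool"
where
  "same_cond_distr P Z X Z' X' MZ MX \<longleftrightarrow>
     (\<exists>K. cond_distr_kernel P Z MZ X MX K \<and> cond_distr_kernel P Z' MZ X' MX K)"

text \<open>An intervention I (with A = 1) producing mediator MI = M_{1,I=1} and outcome
  YI = Y_{1,I=1} is organic with respect to covariates C.\<close>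
definition organic ::
  "'a measure \<Rightarrow> ('a \<Rightarrow> 'c::euclidean_space) \<Rightarrow> ('a \<Rightarrow> 'm::euclidean_space) \<Rightarrow> ('a \<Rightarrow> 'm)
   \<Rightarrow> ('a \<Rightarrow> real) \<Rightarrow> ('a \<Rightarrow> 'm) \<Rightarrow> ('a \<Rightarrow> real) \<Rightarrow> bool"
where
  "organic P C M0 M1 Y1 MI YI \<longleftrightarrow>
     same_cond_distr P C MI C M0 borel borel \<and>
     same_cond_distr P (\<lambda>\<omega>. (MI \<omega>, C \<omega>)) YI (\<lambda>\<omega>. (M1 \<omega>, C \<omega>)) Y1 borel borel"

definition cond_indep ::
  "'a measure \<Rightarrow> ('a \<Rightarrow> 'x) \<Rightarrow> 'x measure \<Rightarrow> ('a \<Rightarrow> 'z) \<Rightarrow> 'z measure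
   \<Rightarrow> ('a \<Rightarrow> 'w) \<Rightarrow> 'w measure \<Rightarrow> bool"
where
  "cond_indep P X MX Z MZ W MW \<longleftrightarrow>
     (\<forall>A\<in>sets MX. \<forall>B\<in>sets MZ.
       AE \<omega> in P.
         real_cond_exp P (vimage_algebra (space P) W MW)
            (\<lambda>\<omega>. indicator A (X \<omega>) * indicator B (Z \<omega>)) \<omega> =
         real_cond_exp P (vimage_algebra (space P) W MW) (\<lambda>\<omega>. indicator A (X \<omega>)) \<omega> *
         real_cond_exp P (vimage_algebra (space P) W MW) (\<lambda>\<omega>. indicator B (Z \<omega>)) \<omega>)"

definition not_common_cause ::
  "'a measure \<Rightarrow> ('a \<Rightarrow> 'x::euclidean_space) \<Rightarrow> ('a \<Rightarrow> 'c::euclidean_space)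
   \<Rightarrow> ('a \<Rightarrow> 'm::euclidean_space) \<Rightarrow> ('a \<Rightarrow> 'm) \<Rightarrow> ('a \<Rightarrow> real) \<Rightarrow> bool"
where
  "not_common_cause P X C M0 M1 Y1 \<longleftrightarrow>
     (cond_indep P X borel M0 borel C borel \<and> cond_indep P X borel M1 borel C borel) \<or>
     cond_indep P X borel Y1 borel (\<lambda>\<omega>. (M1 \<omega>, C \<omega>)) borel"

end

theory Submission
  imports Defs
begin

text \<open>
  By the mediational g-formula, an intervention that is organic with respect to C gives the
  outcome the law \<open>B \<mapsto> E[K(M\<^sub>0, C)(B)]\<close>, where K is the conditional law of \<open>Y\<^sub>1\<close> given
  \<open>(M\<^sub>1, C)\<close>. If \<open>\<rho>\<close> is the density of the law of \<open>(M\<^sub>0, C)\<close> with respect to that of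
  \<open>(M\<^sub>1, C)\<close>, this law is \<open>B \<mapsto> E[\<rho>(M\<^sub>1, C) 1\<^sub>B(Y\<^sub>1)]\<close>: the law of \<open>Y\<^sub>1\<close> reweighted by
  \<open>\<rho>(M\<^sub>1, C)\<close>, which no longer mentions the intervention. Hence all organic interventions
  produce the same outcome law, and in particular the same mean.

  For two covariate sets C and \<open>C'\<close>, both outcome laws are shown to be \<open>Y\<^sub>1\<close> reweighted by
  the density of \<open>(M\<^sub>0, C, C')\<close> with respect to \<open>(M\<^sub>1, C, C')\<close>. That \<open>C'\<close> is not a common
  cause given C is exactly what permits adjoining \<open>C'\<close>: either \<open>C'\<close> is independent of \<open>Y\<^sub>1\<close>
  given \<open>(M\<^sub>1, C)\<close>, so K may be integrated against the finer density, or \<open>C'\<close> is independent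
  of \<open>M\<^sub>0\<close> and of \<open>M\<^sub>1\<close> given C, so the finer density depends on \<open>(M, C)\<close> only.
\<close>

section \<open>Laws of pairs and reweighted laws\<close>

lemma measurable_fst_borel[measurable]:
  "fst \<in> borel_measurable (borel :: ('x::second_countable_topology \<times> 'y::second_countable_topology) measure)"
  using measurable_fst[of "borel :: 'x measure" "borel :: 'y measure"] by (simp add: borel_prod)

lemma measurable_snd_borel[measurable]:
  "snd \<in> borel_measurable (borel :: ('x::second_countable_topology \<times> 'y::second_countable_topology) measure)"
  using measurable_snd[of "borel :: 'x measure" "borel :: 'y measure"] by (simp add: borel_prod)

lemma Times_in_sets_borel[measurable]:
  fixes a :: "'x::second_countable_topology set" and b :: "'y::second_countable_topology set"
  shows "a \<in> sets borel \<Longrightarrow> b \<in> sets borel \<Longrightarrow> a \<times> b \<in> sets borel"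
  using pair_measureI[of a "borel :: 'x measure" b "borel :: 'y measure"] unfolding borel_prod .

lemma measure_eqI_borel_rectangles:
  fixes M N :: "('x::second_countable_topology \<times> 'y::second_countable_topology) measure"
  assumes sets_M: "sets M = sets borel" and sets_N: "sets N = sets borel"
    and finite: "emeasure M UNIV \<noteq> \<infinity>"
    and rectangles: "\<And>a b. a \<in> sets borel \<Longrightarrow> b \<in> sets borel \<Longrightarrow> emeasure M (a \<times> b) = emeasure N (a \<times> b)"
  shows "M = N"
proof -
  let ?G = "{a \<times> b |a b. a \<in> sets (borel :: 'x measure) \<and> b \<in> sets (borel :: 'y measure)}"
  have sets_borel: "sets (borel :: ('x \<times> 'y) measure) = sigma_sets UNIV ?G"
    using sets_pair_measure[of "borel :: 'x measure" "borel :: 'y measure"] unfolding borel_prod by simp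
  have "UNIV \<in> ?G"
    by (intro CollectI exI[of _ UNIV] conjI) simp_all
  then show ?thesis
    using sets_M sets_N sets_borel finite rectangles
    by (intro measure_eqI_generator_eq[OF Int_stable_pair_measure_generator[of borel borel],
          where \<Omega>=UNIV and A="\<lambda>_. UNIV"]) auto
qed

lemma emeasure_distr_Pair_Times:
  fixes X :: "'a \<Rightarrow> 'x::second_countable_topology" and Z :: "'a \<Rightarrow> 'z::second_countable_topology"
  assumes [measurable]: "X \<in> borel_measurable M" "Z \<in> borel_measurable M" "S \<in> sets borel" "B \<in> sets borel"
  shows "emeasure (distr M borel (\<lambda>\<omega>. (X \<omega>, Z \<omega>))) (S \<times> B) =
    (\<integral>\<^sup>+\<omega>. indicator S (X \<omega>) * indicator B (Z \<omega>) \<partial>M)"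
proof -
  have "emeasure (distr M borel (\<lambda>\<omega>. (X \<omega>, Z \<omega>))) (S \<times> B) =
      (\<integral>\<^sup>+\<omega>. indicator ((\<lambda>\<omega>. (X \<omega>, Z \<omega>)) -` (S \<times> B) \<inter> space M) \<omega> \<partial>M)"
    by (simp add: emeasure_distr)
  also have "\<dots> = (\<integral>\<^sup>+\<omega>. indicator S (X \<omega>) * indicator B (Z \<omega>) \<partial>M)"
    by (rule nn_integral_cong) (auto simp: indicator_def)
  finally show ?thesis .
qed

lemma emeasure_density_distr_Pair_Times:
  fixes X :: "'a \<Rightarrow> 'x::second_countable_topology" and Z :: "'a \<Rightarrow> 'z::second_countable_topology"
  assumes [measurable]: "X \<in> borel_measurable M" "Z \<in> borel_measurable M" "S \<in> sets borel" "B \<in> sets borel"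
    "g \<in> borel_measurable borel"
  shows "emeasure (density (distr M borel (\<lambda>\<omega>. (X \<omega>, Z \<omega>))) g) (S \<times> B) =
    (\<integral>\<^sup>+\<omega>. g (X \<omega>, Z \<omega>) * (indicator S (X \<omega>) * indicator B (Z \<omega>)) \<partial>M)"
  by (simp add: emeasure_density nn_integral_distr indicator_times)

lemma emeasure_distr_density_eq_nn_integral:
  assumes [measurable]: "Z \<in> M \<rightarrow>\<^sub>M N" "h \<in> borel_measurable M" "A \<in> sets N"
  shows "emeasure (distr (density M h) N Z) A = (\<integral>\<^sup>+\<omega>. indicator A (Z \<omega>) * h \<omega> \<partial>M)"
  by (simp add: emeasure_distr emeasure_density mult.commute indicator_def cong: nn_integral_cong)

lemma nn_integral_comp_mult_cong_distr:
  assumes [measurable]: "Z \<in> M \<rightarrow>\<^sub>M N" "g \<in> borel_measurable M" "g' \<in> borel_measurable M"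
    "f \<in> borel_measurable N"
    and eq: "distr (density M g) N Z = distr (density M g') N Z"
  shows "(\<integral>\<^sup>+\<omega>. f (Z \<omega>) * g \<omega> \<partial>M) = (\<integral>\<^sup>+\<omega>. f (Z \<omega>) * g' \<omega> \<partial>M)"
proof -
  have "(\<integral>\<^sup>+\<omega>. f (Z \<omega>) * g \<omega> \<partial>M) = integral\<^sup>N (distr (density M g) N Z) f"
    by (simp add: nn_integral_distr nn_integral_density mult.commute)
  also have "\<dots> = integral\<^sup>N (distr (density M g') N Z) f"
    by (simp add: eq)
  also have "\<dots> = (\<integral>\<^sup>+\<omega>. f (Z \<omega>) * g' \<omega> \<partial>M)"
    by (simp add: nn_integral_distr nn_integral_density mult.commute)
  finally show ?thesis .
qed

lemma nn_integral_comp_mult_eqI: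
  assumes [measurable]: "Z \<in> M \<rightarrow>\<^sub>M N" "g \<in> borel_measurable M" "g' \<in> borel_measurable M"
    "f \<in> borel_measurable N"
    and eq: "\<And>A. A \<in> sets N \<Longrightarrow>
      (\<integral>\<^sup>+\<omega>. indicator A (Z \<omega>) * g \<omega> \<partial>M) = (\<integral>\<^sup>+\<omega>. indicator A (Z \<omega>) * g' \<omega> \<partial>M)"
  shows "(\<integral>\<^sup>+\<omega>. f (Z \<omega>) * g \<omega> \<partial>M) = (\<integral>\<^sup>+\<omega>. f (Z \<omega>) * g' \<omega> \<partial>M)"
proof (rule nn_integral_comp_mult_cong_distr[where Z=Z and f=f])
  show "distr (density M g) N Z = distr (density M g') N Z"
    by (rule measure_eqI) (simp_all add: emeasure_distr_density_eq_nn_integral eq)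
qed simp_all

lemma nn_integral_comp_mult_eqI_rectangles:
  fixes Z :: "'a \<Rightarrow> 'x::second_countable_topology \<times> 'y::second_countable_topology"
  assumes [measurable]: "Z \<in> borel_measurable M" "g \<in> borel_measurable M" "g' \<in> borel_measurable M"
    "f \<in> borel_measurable borel"
    and finite: "(\<integral>\<^sup>+\<omega>. g \<omega> \<partial>M) \<noteq> \<infinity>"
    and eq: "\<And>a b. a \<in> sets borel \<Longrightarrow> b \<in> sets borel \<Longrightarrow>
      (\<integral>\<^sup>+\<omega>. indicator (a \<times> b) (Z \<omega>) * g \<omega> \<partial>M) = (\<integral>\<^sup>+\<omega>. indicator (a \<times> b) (Z \<omega>) * g' \<omega> \<partial>M)"
  shows "(\<integral>\<^sup>+\<omega>. f (Z \<omega>) * g \<omega> \<partial>M) = (\<integral>\<^sup>+\<omega>. f (Z \<omega>) * g' \<omega> \<partial>M)"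
proof (rule nn_integral_comp_mult_cong_distr[where Z=Z and f=f])
  show "distr (density M g) borel Z = distr (density M g') borel Z"
    by (rule measure_eqI_borel_rectangles)
       (use finite in \<open>simp_all add: emeasure_distr_density_eq_nn_integral eq\<close>)
qed simp_all

lemma absolutely_continuous_distr:
  assumes ac: "absolutely_continuous M M'" and sets_eq: "sets M' = sets M"
    and [measurable]: "T \<in> M \<rightarrow>\<^sub>M N"
  shows "absolutely_continuous (distr M N T) (distr M' N T)"
  unfolding absolutely_continuous_def
proof
  fix A assume "A \<in> null_sets (distr M N T)"
  then have [measurable]: "A \<in> sets N" and "T -` A \<inter> space M \<in> null_sets M"
    by (auto simp: null_sets_def emeasure_distr)
  then have "T -` A \<inter> space M' \<in> null_sets M'"
    using ac sets_eq by (auto simp: absolutely_continuous_def cong: sets_eq_imp_space_eq)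
  then show "A \<in> null_sets (distr M' N T)"
    using sets_eq by (auto simp: null_sets_def emeasure_distr cong: measurable_cong_sets)
qed

lemma distr_density_comp:
  assumes [measurable]: "T0 \<in> M \<rightarrow>\<^sub>M N" "T1 \<in> M \<rightarrow>\<^sub>M N" "a \<in> N \<rightarrow>\<^sub>M L"
    "\<rho> \<in> borel_measurable N" "\<rho>' \<in> borel_measurable L"
    and factor: "\<And>x. \<rho>' (a x) = \<rho> x"
    and dens: "distr M N T0 = density (distr M N T1) \<rho>"
  shows "distr M L (\<lambda>\<omega>. a (T0 \<omega>)) = density (distr M L (\<lambda>\<omega>. a (T1 \<omega>))) \<rho>'"
proof -
  have "distr M L (\<lambda>\<omega>. a (T0 \<omega>)) = distr (distr M N T0) L a"
    by (simp add: distr_distr comp_def)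
  also have "\<dots> = distr (density (distr M N T1) (\<lambda>x. \<rho>' (a x))) L a"
    by (simp add: dens factor)
  also have "\<dots> = density (distr M L (\<lambda>\<omega>. a (T1 \<omega>))) \<rho>'"
    by (simp add: density_distr distr_distr comp_def)
  finally show ?thesis .
qed

lemma (in prob_space) distr_density_exists:
  assumes [measurable]: "T0 \<in> M \<rightarrow>\<^sub>M N" "T1 \<in> M \<rightarrow>\<^sub>M N"
    and ac: "absolutely_continuous (distr M N T1) (distr M N T0)"
  obtains \<rho> where "\<rho> \<in> borel_measurable N" "distr M N T0 = density (distr M N T1) \<rho>"
proof
  interpret T1: prob_space "distr M N T1"
    by (rule prob_space_distr) simp
  show "RN_deriv (distr M N T1) (distr M N T0) \<in> borel_measurable N"
    using borel_measurable_RN_deriv[of "distr M N T1"] by simp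
  show "distr M N T0 = density (distr M N T1) (RN_deriv (distr M N T1) (distr M N T0))"
    by (rule T1.density_RN_deriv[OF ac, symmetric]) simp
qed

section \<open>Conditional distribution kernels\<close>

lemma cond_distr_kernel_prob_space:
  assumes "cond_distr_kernel P Z MZ X MX K" "z \<in> space MZ"
  shows "prob_space (K z)" "sets (K z) = sets MX"
  using measurable_space[of K MZ "prob_algebra MX" z] assms
  unfolding cond_distr_kernel_def space_prob_algebra by auto

lemma cond_distr_kernel_measurable:
  assumes "cond_distr_kernel P Z MZ X MX K" "B \<in> sets MX"
  shows "(\<lambda>z. emeasure (K z) B) \<in> borel_measurable MZ"
    and "(\<lambda>z. measure (K z) B) \<in> borel_measurable MZ"
proof -
  have "K \<in> MZ \<rightarrow>\<^sub>M subprob_algebra MX"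
    using assms(1) unfolding cond_distr_kernel_def by (auto intro: measurable_prob_algebraD)
  then show emeasure: "(\<lambda>z. emeasure (K z) B) \<in> borel_measurable MZ"
    using assms(2) by (rule measurable_emeasure_kernel)
  then show "(\<lambda>z. measure (K z) B) \<in> borel_measurable MZ"
    unfolding measure_def by measurable
qed

lemma (in prob_space) cond_distr_kernel_emeasure:
  assumes K: "cond_distr_kernel M Z MZ X MX K"
    and [measurable]: "Z \<in> M \<rightarrow>\<^sub>M MZ" "X \<in> M \<rightarrow>\<^sub>M MX" "A \<in> sets MZ" "B \<in> sets MX"
  shows "emeasure M {\<omega>\<in>space M. Z \<omega> \<in> A \<and> X \<omega> \<in> B} =
    (\<integral>\<^sup>+\<omega>. indicator A (Z \<omega>) * emeasure (K (Z \<omega>)) B \<partial>M)"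
proof -
  note [measurable] = cond_distr_kernel_measurable[OF K]
  have K_prob: "prob_space (K (Z \<omega>))" if "\<omega> \<in> space M" for \<omega>
    using cond_distr_kernel_prob_space[OF K] measurable_space[OF assms(2) that] by blast
  then have K_emeasure: "emeasure (K (Z \<omega>)) B = ennreal (measure (K (Z \<omega>)) B)" if "\<omega> \<in> space M" for \<omega>
    using that by (simp add: finite_measure.emeasure_eq_measure prob_space_def)
  have "(\<integral>\<^sup>+\<omega>. indicator A (Z \<omega>) * emeasure (K (Z \<omega>)) B \<partial>M) =
      (\<integral>\<^sup>+\<omega>. ennreal (indicator A (Z \<omega>) * measure (K (Z \<omega>)) B) \<partial>M)"
    by (rule nn_integral_cong) (simp add: K_emeasure indicator_def)
  also have "\<dots> = ennreal (\<integral>\<omega>. indicator A (Z \<omega>) * measure (K (Z \<omega>)) B \<partial>M)"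
  proof (rule nn_integral_eq_integral)
    show "integrable M (\<lambda>\<omega>. indicator A (Z \<omega>) * measure (K (Z \<omega>)) B)"
      by (rule integrable_const_bound[where B=1])
         (auto intro!: AE_I2 simp: K_prob prob_space.prob_le_1 indicator_def)
  qed (auto simp: indicator_def)
  also have "\<dots> = emeasure M {\<omega>\<in>space M. Z \<omega> \<in> A \<and> X \<omega> \<in> B}"
    using K unfolding cond_distr_kernel_def by (simp add: emeasure_eq_measure)
  finally show ?thesis ..
qed

lemma (in prob_space) cond_distr_kernel_nn_integral:
  assumes K: "cond_distr_kernel M Z MZ X MX K"
    and [measurable]: "Z \<in> M \<rightarrow>\<^sub>M MZ" "X \<in> M \<rightarrow>\<^sub>M MX" "B \<in> sets MX" "f \<in> borel_measurable MZ"
  shows "(\<integral>\<^sup>+\<omega>. f (Z \<omega>) * indicator B (X \<omega>) \<partial>M) = (\<integral>\<^sup>+\<omega>. f (Z \<omega>) * emeasure (K (Z \<omega>)) B \<partial>M)"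
proof (rule nn_integral_comp_mult_eqI[where Z=Z and f=f])
  note [measurable] = cond_distr_kernel_measurable[OF K]
  show "(\<lambda>\<omega>. emeasure (K (Z \<omega>)) B) \<in> borel_measurable M" by measurable
  fix A assume [measurable]: "A \<in> sets MZ"
  have "(\<integral>\<^sup>+\<omega>. indicator A (Z \<omega>) * indicator B (X \<omega>) \<partial>M) =
      (\<integral>\<^sup>+\<omega>. indicator {\<omega>\<in>space M. Z \<omega> \<in> A \<and> X \<omega> \<in> B} \<omega> \<partial>M)"
    by (rule nn_integral_cong) (auto simp: indicator_def)
  also have "\<dots> = (\<integral>\<^sup>+\<omega>. indicator A (Z \<omega>) * emeasure (K (Z \<omega>)) B \<partial>M)"
    by (simp add: cond_distr_kernel_emeasure[OF K])
  finally show "(\<integral>\<^sup>+\<omega>. indicator A (Z \<omega>) * indicator B (X \<omega>) \<partial>M) =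
      (\<integral>\<^sup>+\<omega>. indicator A (Z \<omega>) * emeasure (K (Z \<omega>)) B \<partial>M)" .
qed simp_all

lemma (in prob_space) cond_distr_kernel_distr_eq:
  fixes Z :: "'a \<Rightarrow> 'z::second_countable_topology" and X X' :: "'a \<Rightarrow> 'x::second_countable_topology"
  assumes K: "cond_distr_kernel M Z borel X borel K" "cond_distr_kernel M Z borel X' borel K"
    and [measurable]: "Z \<in> borel_measurable M" "X \<in> borel_measurable M" "X' \<in> borel_measurable M"
  shows "distr M borel (\<lambda>\<omega>. (X \<omega>, Z \<omega>)) = distr M borel (\<lambda>\<omega>. (X' \<omega>, Z \<omega>))"
proof (rule measure_eqI_borel_rectangles)
  fix a :: "'x set" and b :: "'z set" assume [measurable]: "a \<in> sets borel" "b \<in> sets borel"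
  have "emeasure (distr M borel (\<lambda>\<omega>. (X \<omega>, Z \<omega>))) (a \<times> b) =
      (\<integral>\<^sup>+\<omega>. indicator b (Z \<omega>) * indicator a (X \<omega>) \<partial>M)"
    by (simp add: emeasure_distr_Pair_Times mult.commute)
  also have "\<dots> = (\<integral>\<^sup>+\<omega>. indicator b (Z \<omega>) * indicator a (X' \<omega>) \<partial>M)"
    by (simp add: cond_distr_kernel_nn_integral[OF K(1)] cond_distr_kernel_nn_integral[OF K(2)])
  also have "\<dots> = emeasure (distr M borel (\<lambda>\<omega>. (X' \<omega>, Z \<omega>))) (a \<times> b)"
    by (simp add: emeasure_distr_Pair_Times mult.commute)
  finally show "emeasure (distr M borel (\<lambda>\<omega>. (X \<omega>, Z \<omega>))) (a \<times> b) =
      emeasure (distr M borel (\<lambda>\<omega>. (X' \<omega>, Z \<omega>))) (a \<times> b)" .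
qed (simp_all add: emeasure_distr)

lemma subalgebra_vimage_algebra:
  "W \<in> M \<rightarrow>\<^sub>M MW \<Longrightarrow> subalgebra M (vimage_algebra (space M) W MW)"
  by (auto simp: subalgebra_def sets_vimage_algebra2 measurable_def)

lemma (in prob_space) real_cond_exp_cond_distr_kernel:
  fixes W :: "'a \<Rightarrow> 'w::second_countable_topology" and Y :: "'a \<Rightarrow> 'y::second_countable_topology"
  assumes K: "cond_distr_kernel M W borel Y borel K"
    and [measurable]: "W \<in> borel_measurable M" "Y \<in> borel_measurable M" "E \<in> sets borel"
  shows "AE \<omega> in M. ennreal (real_cond_exp M (vimage_algebra (space M) W borel) (\<lambda>\<omega>. indicator E (Y \<omega>)) \<omega>)
    = emeasure (K (W \<omega>)) E"
proof -
  define F where "F = vimage_algebra (space M) W borel"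
  interpret F: finite_measure_subalgebra M F
    unfolding F_def by unfold_locales (rule subalgebra_vimage_algebra; simp)
  have [measurable]: "W \<in> F \<rightarrow>\<^sub>M borel"
    unfolding F_def by (rule measurable_vimage_algebra1) simp
  note [measurable] = cond_distr_kernel_measurable[OF K]
  have K_prob: "prob_space (K (W \<omega>))" if "\<omega> \<in> space M" for \<omega>
    using cond_distr_kernel_prob_space[OF K] that by simp
  then have K_emeasure: "emeasure (K (W \<omega>)) E = ennreal (measure (K (W \<omega>)) E)" if "\<omega> \<in> space M" for \<omega>
    using that by (simp add: finite_measure.emeasure_eq_measure prob_space_def)
  have "AE \<omega> in M. real_cond_exp M F (\<lambda>\<omega>. indicator E (Y \<omega>)) \<omega> = measure (K (W \<omega>)) E"
  proof (rule F.real_cond_exp_charact)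
    fix A assume "A \<in> sets F"
    then obtain A' where [measurable]: "A' \<in> sets borel" and A: "A = W -` A' \<inter> space M"
      unfolding F_def using sets_vimage_algebra2[of W "space M" borel] by auto
    have "(\<integral>\<omega>\<in>A. indicator E (Y \<omega>) \<partial>M) =
        (\<integral>\<omega>. indicator {\<omega>\<in>space M. W \<omega> \<in> A' \<and> Y \<omega> \<in> E} \<omega> \<partial>M)"
      unfolding set_lebesgue_integral_def A
      by (auto intro!: Bochner_Integration.integral_cong simp: indicator_def)
    also have "\<dots> = measure M {\<omega>\<in>space M. W \<omega> \<in> A' \<and> Y \<omega> \<in> E}"
      by simp
    also have "\<dots> = (\<integral>\<omega>\<in>A. measure (K (W \<omega>)) E \<partial>M)"
      using K unfolding cond_distr_kernel_def set_lebesgue_integral_def A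
      by (auto intro!: Bochner_Integration.integral_cong simp: indicator_def)
    finally show "(\<integral>\<omega>\<in>A. indicator E (Y \<omega>) \<partial>M) = (\<integral>\<omega>\<in>A. measure (K (W \<omega>)) E \<partial>M)" .
  qed (auto intro!: integrable_const_bound[where B=1] AE_I2
        simp: K_prob prob_space.prob_le_1 indicator_def)
  then show ?thesis
    unfolding F_def[symmetric] by (rule AE_mp) (auto intro!: AE_I2 simp: K_emeasure)
qed

section \<open>Conditional independence\<close>

lemma measurable_vimage_algebra_factor:
  fixes G :: "'a \<Rightarrow> ennreal"
  assumes W: "W \<in> M \<rightarrow>\<^sub>M MW" and G: "G \<in> borel_measurable (vimage_algebra (space M) W MW)"
  obtains g where "g \<in> borel_measurable MW" "\<And>\<omega>. \<omega> \<in> space M \<Longrightarrow> G \<omega> = g (W \<omega>)"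
proof -
  have "\<exists>g \<in> borel_measurable MW. \<forall>\<omega>\<in>space M. G \<omega> = g (W \<omega>)"
    using G
  proof (induction rule: borel_measurable_induct)
    case (cong f f')
    then show ?case by (metis space_vimage_algebra)
  next
    case (set A)
    then obtain A' where "A' \<in> sets MW" "A = W -` A' \<inter> space M"
      using W sets_vimage_algebra2[of W "space M" MW] by (auto simp: measurable_def)
    then show ?case
      by (intro bexI[of _ "indicator A'"]) (auto simp: indicator_def)
  next
    case (mult u c)
    then obtain g where "g \<in> borel_measurable MW" "\<forall>\<omega>\<in>space M. u \<omega> = g (W \<omega>)" by blast
    then show ?case
      by (intro bexI[of _ "\<lambda>z. c * g z"]) auto
  next
    case (add u v)
    then obtain g g' where "g \<in> borel_measurable MW" "\<forall>\<omega>\<in>space M. u \<omega> = g (W \<omega>)"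
      "g' \<in> borel_measurable MW" "\<forall>\<omega>\<in>space M. v \<omega> = g' (W \<omega>)" by blast
    then show ?case
      by (intro bexI[of _ "\<lambda>z. g' z + g z"]) auto
  next
    case (seq U)
    then obtain g where "\<And>i. g i \<in> borel_measurable MW" "\<And>i \<omega>. \<omega> \<in> space M \<Longrightarrow> U i \<omega> = g i (W \<omega>)"
      by metis
    then show ?case
      by (intro bexI[of _ "\<lambda>z. SUP i. g i z"]) (auto simp: image_image intro!: SUP_cong)
  qed
  then show ?thesis using that by blast
qed

lemma cond_indep_commute:
  "cond_indep M X MX Y MY W MW \<Longrightarrow> cond_indep M Y MY X MX W MW"
  unfolding cond_indep_def by (simp add: mult.commute)

lemma (in prob_space) cond_indep_integral_Times:
  fixes W :: "'a \<Rightarrow> 'w::second_countable_topology" and X :: "'a \<Rightarrow> 'x::second_countable_topology"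
    and Y :: "'a \<Rightarrow> 'y::second_countable_topology" and B :: "'y set"
  defines "G \<equiv> real_cond_exp M (vimage_algebra (space M) W borel) (\<lambda>\<omega>. indicator B (Y \<omega>))"
  assumes ci: "cond_indep M X borel Y borel W borel"
    and [measurable]: "W \<in> borel_measurable M" "X \<in> borel_measurable M" "Y \<in> borel_measurable M"
      "a \<in> sets borel" "b \<in> sets borel" "B \<in> sets borel"
  shows "(\<integral>\<omega>. indicator a (W \<omega>) * indicator b (X \<omega>) * indicator B (Y \<omega>) \<partial>M) =
    (\<integral>\<omega>. indicator a (W \<omega>) * indicator b (X \<omega>) * G \<omega> \<partial>M)"
proof -
  define F where "F = vimage_algebra (space M) W borel"
  interpret F: finite_measure_subalgebra M F
    unfolding F_def by unfold_locales (rule subalgebra_vimage_algebra; simp)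
  have [measurable]: "W \<in> F \<rightarrow>\<^sub>M borel"
    unfolding F_def by (rule measurable_vimage_algebra1) simp
  have [measurable]: "G \<in> borel_measurable F" "G \<in> borel_measurable M"
    unfolding G_def F_def[symmetric] by simp_all
  have G_int: "integrable M G"
    unfolding G_def F_def[symmetric]
    by (rule F.real_cond_exp_int(1), rule integrable_const_bound[where B=1]) (auto simp: indicator_def)
  have "(\<integral>\<omega>. indicator a (W \<omega>) * indicator b (X \<omega>) * indicator B (Y \<omega>) \<partial>M) =
      (\<integral>\<omega>. indicator a (W \<omega>) * real_cond_exp M F (\<lambda>\<omega>. indicator b (X \<omega>) * indicator B (Y \<omega>)) \<omega> \<partial>M)"
    unfolding mult.assoc
    by (rule F.real_cond_exp_intg(2)[symmetric])
       (auto intro!: integrable_const_bound[where B=1] simp: indicator_def)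
  also have "\<dots> = (\<integral>\<omega>. indicator a (W \<omega>) * G \<omega> * real_cond_exp M F (\<lambda>\<omega>. indicator b (X \<omega>)) \<omega> \<partial>M)"
  proof (rule integral_cong_AE)
    have "AE \<omega> in M. real_cond_exp M F (\<lambda>\<omega>. indicator b (X \<omega>) * indicator B (Y \<omega>)) \<omega> =
        real_cond_exp M F (\<lambda>\<omega>. indicator b (X \<omega>)) \<omega> * G \<omega>"
      using ci unfolding cond_indep_def F_def G_def by simp
    then show "AE \<omega> in M. indicator a (W \<omega>) * real_cond_exp M F (\<lambda>\<omega>. indicator b (X \<omega>) * indicator B (Y \<omega>)) \<omega> =
        indicator a (W \<omega>) * G \<omega> * real_cond_exp M F (\<lambda>\<omega>. indicator b (X \<omega>)) \<omega>"
      by eventually_elim simp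
  qed simp_all
  also have "\<dots> = (\<integral>\<omega>. indicator a (W \<omega>) * G \<omega> * indicator b (X \<omega>) \<partial>M)"
  proof (rule F.real_cond_exp_intg(2))
    show "integrable M (\<lambda>\<omega>. indicator a (W \<omega>) * G \<omega> * indicator b (X \<omega>))"
      by (rule Bochner_Integration.integrable_bound[OF G_int]) (auto simp: indicator_def)
  qed simp_all
  finally show ?thesis by (simp add: ac_simps)
qed

lemma (in prob_space) cond_indep_nn_integral:
  fixes W :: "'a \<Rightarrow> 'w::second_countable_topology" and X :: "'a \<Rightarrow> 'x::second_countable_topology"
    and Y :: "'a \<Rightarrow> 'y::second_countable_topology" and B :: "'y set"
  defines "G \<equiv> real_cond_exp M (vimage_algebra (space M) W borel) (\<lambda>\<omega>. indicator B (Y \<omega>))"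
  assumes ci: "cond_indep M X borel Y borel W borel"
    and [measurable]: "W \<in> borel_measurable M" "X \<in> borel_measurable M" "Y \<in> borel_measurable M"
      "B \<in> sets borel" "f \<in> borel_measurable borel"
  shows "(\<integral>\<^sup>+\<omega>. f (W \<omega>, X \<omega>) * indicator B (Y \<omega>) \<partial>M) = (\<integral>\<^sup>+\<omega>. f (W \<omega>, X \<omega>) * ennreal (G \<omega>) \<partial>M)"
proof (rule nn_integral_comp_mult_eqI_rectangles[where Z="\<lambda>\<omega>. (W \<omega>, X \<omega>)" and f=f])
  interpret F: finite_measure_subalgebra M "vimage_algebra (space M) W borel"
    by unfold_locales (rule subalgebra_vimage_algebra; simp)
  have G_int: "integrable M G"
    unfolding G_def
    by (rule F.real_cond_exp_int(1), rule integrable_const_bound[where B=1]) (auto simp: indicator_def)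
  have G_nonneg: "AE \<omega> in M. 0 \<le> G \<omega>"
    unfolding G_def by (rule F.real_cond_exp_pos) auto
  have [measurable]: "G \<in> borel_measurable M"
    unfolding G_def by simp
  then show "(\<lambda>\<omega>. ennreal (G \<omega>)) \<in> borel_measurable M"
    by simp
  have "(\<integral>\<^sup>+\<omega>. indicator B (Y \<omega>) \<partial>M) \<le> (\<integral>\<^sup>+\<omega>. 1 \<partial>M)"
    by (intro nn_integral_mono) (simp add: indicator_def)
  then show "(\<integral>\<^sup>+\<omega>. indicator B (Y \<omega>) \<partial>M) \<noteq> \<infinity>"
    by (auto simp: emeasure_space_1 top_unique)
  fix a :: "'w set" and b :: "'x set" assume [measurable]: "a \<in> sets borel" "b \<in> sets borel"
  have "(\<integral>\<^sup>+\<omega>. indicator (a \<times> b) (W \<omega>, X \<omega>) * indicator B (Y \<omega>) \<partial>M) =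
      ennreal (\<integral>\<omega>. indicator a (W \<omega>) * indicator b (X \<omega>) * indicator B (Y \<omega>) \<partial>M)"
    by (subst nn_integral_eq_integral[symmetric])
       (auto intro!: integrable_const_bound[where B=1] nn_integral_cong simp: indicator_def)
  also have "\<dots> = ennreal (\<integral>\<omega>. indicator a (W \<omega>) * indicator b (X \<omega>) * G \<omega> \<partial>M)"
    unfolding G_def using ci by (simp add: cond_indep_integral_Times)
  also have "\<dots> = (\<integral>\<^sup>+\<omega>. indicator (a \<times> b) (W \<omega>, X \<omega>) * ennreal (G \<omega>) \<partial>M)"
    by (subst nn_integral_eq_integral[symmetric])
       (use G_nonneg in \<open>auto intro!: Bochner_Integration.integrable_bound[OF G_int] nn_integral_cong
         elim!: AE_mp simp: indicator_def\<close>)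
  finally show "(\<integral>\<^sup>+\<omega>. indicator (a \<times> b) (W \<omega>, X \<omega>) * indicator B (Y \<omega>) \<partial>M) =
      (\<integral>\<^sup>+\<omega>. indicator (a \<times> b) (W \<omega>, X \<omega>) * ennreal (G \<omega>) \<partial>M)" .
qed simp_all

section \<open>Reweighting by density ratios\<close>

lemma (in prob_space) nn_integral_kernel_reweight:
  fixes W0 W1 :: "'a \<Rightarrow> 'w::second_countable_topology" and Y :: "'a \<Rightarrow> 'y::second_countable_topology"
  assumes K: "cond_distr_kernel M W1 borel Y borel K"
    and [measurable]: "W0 \<in> borel_measurable M" "W1 \<in> borel_measurable M" "Y \<in> borel_measurable M"
      "E \<in> sets borel" "r \<in> borel_measurable borel"
    and dens: "distr M borel W0 = density (distr M borel W1) r"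
  shows "(\<integral>\<^sup>+\<omega>. emeasure (K (W0 \<omega>)) E \<partial>M) = (\<integral>\<^sup>+\<omega>. r (W1 \<omega>) * indicator E (Y \<omega>) \<partial>M)"
proof -
  note [measurable] = cond_distr_kernel_measurable[OF K]
  have "(\<integral>\<^sup>+\<omega>. emeasure (K (W0 \<omega>)) E \<partial>M) = integral\<^sup>N (distr M borel W0) (\<lambda>z. emeasure (K z) E)"
    by (simp add: nn_integral_distr)
  also have "\<dots> = (\<integral>\<^sup>+\<omega>. r (W1 \<omega>) * emeasure (K (W1 \<omega>)) E \<partial>M)"
    by (simp add: dens nn_integral_density nn_integral_distr)
  also have "\<dots> = (\<integral>\<^sup>+\<omega>. r (W1 \<omega>) * indicator E (Y \<omega>) \<partial>M)"
    by (simp add: cond_distr_kernel_nn_integral[OF K])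
  finally show ?thesis .
qed

lemma (in prob_space) nn_integral_kernel_reweight_cond_indep_outcome:
  fixes W0 W1 :: "'a \<Rightarrow> 'w::second_countable_topology" and D :: "'a \<Rightarrow> 'd::second_countable_topology"
    and Y :: "'a \<Rightarrow> 'y::second_countable_topology"
  assumes K: "cond_distr_kernel M W1 borel Y borel K" and ci: "cond_indep M D borel Y borel W1 borel"
    and [measurable]: "W0 \<in> borel_measurable M" "W1 \<in> borel_measurable M" "D \<in> borel_measurable M"
      "Y \<in> borel_measurable M" "r \<in> borel_measurable borel"
    and E[measurable]: "E \<in> sets borel"
    and dens: "distr M borel (\<lambda>\<omega>. (W0 \<omega>, D \<omega>)) = density (distr M borel (\<lambda>\<omega>. (W1 \<omega>, D \<omega>))) r"
  shows "(\<integral>\<^sup>+\<omega>. emeasure (K (W0 \<omega>)) E \<partial>M) = (\<integral>\<^sup>+\<omega>. r (W1 \<omega>, D \<omega>) * indicator E (Y \<omega>) \<partial>M)"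
proof -
  note [measurable] = cond_distr_kernel_measurable[OF K]
  have "(\<integral>\<^sup>+\<omega>. r (W1 \<omega>, D \<omega>) * indicator E (Y \<omega>) \<partial>M) =
      (\<integral>\<^sup>+\<omega>. r (W1 \<omega>, D \<omega>) *
        ennreal (real_cond_exp M (vimage_algebra (space M) W1 borel) (\<lambda>\<omega>. indicator E (Y \<omega>)) \<omega>) \<partial>M)"
    by (rule cond_indep_nn_integral[OF ci]) simp_all
  also have "\<dots> = (\<integral>\<^sup>+\<omega>. r (W1 \<omega>, D \<omega>) * emeasure (K (W1 \<omega>)) E \<partial>M)"
    by (rule nn_integral_cong_AE) (use real_cond_exp_cond_distr_kernel[OF K _ _ E] in auto)
  also have "\<dots> = integral\<^sup>N (density (distr M borel (\<lambda>\<omega>. (W1 \<omega>, D \<omega>))) r) (\<lambda>x. emeasure (K (fst x)) E)"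
    by (simp add: nn_integral_density nn_integral_distr)
  also have "\<dots> = (\<integral>\<^sup>+\<omega>. emeasure (K (W0 \<omega>)) E \<partial>M)"
    by (simp add: dens[symmetric] nn_integral_distr)
  finally show ?thesis by simp
qed

lemma (in prob_space) distr_density_cond_indep_extend:
  fixes X0 X1 :: "'a \<Rightarrow> 'x::second_countable_topology" and C :: "'a \<Rightarrow> 'c::second_countable_topology"
    and D :: "'a \<Rightarrow> 'd::second_countable_topology"
  assumes ci0: "cond_indep M D borel X0 borel C borel" and ci1: "cond_indep M D borel X1 borel C borel"
    and [measurable]: "X0 \<in> borel_measurable M" "X1 \<in> borel_measurable M" "C \<in> borel_measurable M"
      "D \<in> borel_measurable M" "r \<in> borel_measurable borel"
    and dens: "distr M borel (\<lambda>\<omega>. (X0 \<omega>, C \<omega>)) = density (distr M borel (\<lambda>\<omega>. (X1 \<omega>, C \<omega>))) r"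
  shows "distr M borel (\<lambda>\<omega>. ((X0 \<omega>, C \<omega>), D \<omega>)) =
    density (distr M borel (\<lambda>\<omega>. ((X1 \<omega>, C \<omega>), D \<omega>))) (\<lambda>x. r (fst x))"
proof (rule measure_eqI_borel_rectangles)
  fix S :: "('x \<times> 'c) set" and B :: "'d set" assume [measurable]: "S \<in> sets borel" "B \<in> sets borel"
  define G where "G = real_cond_exp M (vimage_algebra (space M) C borel) (\<lambda>\<omega>. indicator B (D \<omega>))"
  have G_meas: "(\<lambda>\<omega>. ennreal (G \<omega>)) \<in> borel_measurable (vimage_algebra (space M) C borel)"
    unfolding G_def by measurable
  obtain \<gamma> where [measurable]: "\<gamma> \<in> borel_measurable borel"
    and \<gamma>: "\<And>\<omega>. \<omega> \<in> space M \<Longrightarrow> ennreal (G \<omega>) = \<gamma> (C \<omega>)"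
    by (rule measurable_vimage_algebra_factor[OF _ G_meas]) auto
  have swap: "(\<integral>\<^sup>+\<omega>. f (X \<omega>, C \<omega>) * indicator B (D \<omega>) \<partial>M) = (\<integral>\<^sup>+\<omega>. f (X \<omega>, C \<omega>) * \<gamma> (C \<omega>) \<partial>M)"
    if "cond_indep M D borel X borel C borel" "X \<in> borel_measurable M" "f \<in> borel_measurable borel"
    for X :: "'a \<Rightarrow> 'x" and f
    using cond_indep_nn_integral[OF cond_indep_commute[OF that(1)], where B=B and f="\<lambda>x. f (snd x, fst x)"] that
    by (simp add: G_def[symmetric] \<gamma> cong: nn_integral_cong)
  have "emeasure (distr M borel (\<lambda>\<omega>. ((X0 \<omega>, C \<omega>), D \<omega>))) (S \<times> B) =
      (\<integral>\<^sup>+\<omega>. indicator S (X0 \<omega>, C \<omega>) * \<gamma> (C \<omega>) \<partial>M)"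
    by (simp add: emeasure_distr_Pair_Times swap[OF ci0])
  also have "\<dots> = (\<integral>\<^sup>+x. indicator S x * \<gamma> (snd x) \<partial>distr M borel (\<lambda>\<omega>. (X0 \<omega>, C \<omega>)))"
    by (simp add: nn_integral_distr)
  also have "\<dots> = (\<integral>\<^sup>+x. r x * (indicator S x * \<gamma> (snd x)) \<partial>distr M borel (\<lambda>\<omega>. (X1 \<omega>, C \<omega>)))"
    by (simp add: dens nn_integral_density)
  also have "\<dots> = (\<integral>\<^sup>+\<omega>. r (X1 \<omega>, C \<omega>) * indicator S (X1 \<omega>, C \<omega>) * indicator B (D \<omega>) \<partial>M)"
    using swap[OF ci1, of "\<lambda>x. r x * indicator S x"] by (simp add: nn_integral_distr mult.assoc)
  also have "\<dots> = emeasure (density (distr M borel (\<lambda>\<omega>. ((X1 \<omega>, C \<omega>), D \<omega>))) (\<lambda>x. r (fst x))) (S \<times> B)"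
    by (simp add: emeasure_density_distr_Pair_Times mult.assoc)
  finally show "emeasure (distr M borel (\<lambda>\<omega>. ((X0 \<omega>, C \<omega>), D \<omega>))) (S \<times> B) =
      emeasure (density (distr M borel (\<lambda>\<omega>. ((X1 \<omega>, C \<omega>), D \<omega>))) (\<lambda>x. r (fst x))) (S \<times> B)" .
qed (simp_all add: emeasure_distr)

lemma (in prob_space) nn_integral_kernel_reweight_cond_indep_mediator:
  fixes X0 X1 :: "'a \<Rightarrow> 'x::second_countable_topology" and C :: "'a \<Rightarrow> 'c::second_countable_topology"
    and D :: "'a \<Rightarrow> 'd::second_countable_topology" and Y :: "'a \<Rightarrow> 'y::second_countable_topology"
  assumes K: "cond_distr_kernel M (\<lambda>\<omega>. (X1 \<omega>, C \<omega>)) borel Y borel K"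
    and ci0: "cond_indep M D borel X0 borel C borel" and ci1: "cond_indep M D borel X1 borel C borel"
    and [measurable]: "X0 \<in> borel_measurable M" "X1 \<in> borel_measurable M" "C \<in> borel_measurable M"
      "D \<in> borel_measurable M" "Y \<in> borel_measurable M" "E \<in> sets borel" "\<rho> \<in> borel_measurable borel"
    and dens: "distr M borel (\<lambda>\<omega>. ((X0 \<omega>, C \<omega>), D \<omega>)) =
      density (distr M borel (\<lambda>\<omega>. ((X1 \<omega>, C \<omega>), D \<omega>))) \<rho>"
  shows "(\<integral>\<^sup>+\<omega>. emeasure (K (X0 \<omega>, C \<omega>)) E \<partial>M) = (\<integral>\<^sup>+\<omega>. \<rho> ((X1 \<omega>, C \<omega>), D \<omega>) * indicator E (Y \<omega>) \<partial>M)"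
proof -
  let ?T1 = "distr M borel (\<lambda>\<omega>. ((X1 \<omega>, C \<omega>), D \<omega>))"
  have "absolutely_continuous (distr ?T1 borel fst) (distr (density ?T1 \<rho>) borel fst)"
    by (rule absolutely_continuous_distr[OF absolutely_continuousI_density]) simp_all
  then have ac: "absolutely_continuous (distr M borel (\<lambda>\<omega>. (X1 \<omega>, C \<omega>))) (distr M borel (\<lambda>\<omega>. (X0 \<omega>, C \<omega>)))"
    by (simp add: distr_distr comp_def flip: dens)
  obtain r where [measurable]: "r \<in> borel_measurable borel"
    and r: "distr M borel (\<lambda>\<omega>. (X0 \<omega>, C \<omega>)) = density (distr M borel (\<lambda>\<omega>. (X1 \<omega>, C \<omega>))) r"
    by (rule distr_density_exists[OF _ _ ac]) simp_all
  interpret T1: prob_space ?T1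
    by (rule prob_space_distr) simp
  have "AE x in ?T1. \<rho> x = r (fst x)"
    using dens distr_density_cond_indep_extend[OF ci0 ci1 _ _ _ _ _ r]
    by (intro T1.density_unique) simp_all
  then have "AE \<omega> in M. \<rho> ((X1 \<omega>, C \<omega>), D \<omega>) = r (X1 \<omega>, C \<omega>)"
    by (simp add: AE_distr_iff)
  then have "(\<integral>\<^sup>+\<omega>. \<rho> ((X1 \<omega>, C \<omega>), D \<omega>) * indicator E (Y \<omega>) \<partial>M) =
      (\<integral>\<^sup>+\<omega>. r (X1 \<omega>, C \<omega>) * indicator E (Y \<omega>) \<partial>M)"
    by (intro nn_integral_cong_AE) auto
  also have "\<dots> = (\<integral>\<^sup>+\<omega>. emeasure (K (X0 \<omega>, C \<omega>)) E \<partial>M)"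
    by (rule nn_integral_kernel_reweight[OF K, symmetric]) (simp_all add: r)
  finally show ?thesis by simp
qed

section \<open>Organic interventions\<close>

lemma (in prob_space) organic_g_formula:
  fixes C :: "'a \<Rightarrow> 'c::euclidean_space" and M0 M1 MI :: "'a \<Rightarrow> 'm::euclidean_space"
    and Y1 YI :: "'a \<Rightarrow> real"
  assumes org: "organic M C M0 M1 Y1 MI YI"
    and [measurable]: "C \<in> borel_measurable M" "M0 \<in> borel_measurable M" "MI \<in> borel_measurable M"
      "YI \<in> borel_measurable M"
  obtains K where "cond_distr_kernel M (\<lambda>\<omega>. (M1 \<omega>, C \<omega>)) borel Y1 borel K"
    "\<And>E. E \<in> sets borel \<Longrightarrow>
      emeasure (distr M borel YI) E = (\<integral>\<^sup>+\<omega>. emeasure (K (M0 \<omega>, C \<omega>)) E \<partial>M)"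
proof -
  obtain K1 where "cond_distr_kernel M C borel MI borel K1" "cond_distr_kernel M C borel M0 borel K1"
    using org unfolding organic_def same_cond_distr_def by blast
  then have law: "distr M borel (\<lambda>\<omega>. (MI \<omega>, C \<omega>)) = distr M borel (\<lambda>\<omega>. (M0 \<omega>, C \<omega>))"
    by (rule cond_distr_kernel_distr_eq) simp_all
  obtain K where K: "cond_distr_kernel M (\<lambda>\<omega>. (MI \<omega>, C \<omega>)) borel YI borel K"
      "cond_distr_kernel M (\<lambda>\<omega>. (M1 \<omega>, C \<omega>)) borel Y1 borel K"
    using org unfolding organic_def same_cond_distr_def by blast
  have "emeasure (distr M borel YI) E = (\<integral>\<^sup>+\<omega>. emeasure (K (M0 \<omega>, C \<omega>)) E \<partial>M)"
    if [measurable]: "E \<in> sets borel" for E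
  proof -
    note [measurable] = cond_distr_kernel_measurable[OF K(1)]
    have "emeasure (distr M borel YI) E = (\<integral>\<^sup>+\<omega>. indicator E (YI \<omega>) \<partial>M)"
      by (simp flip: nn_integral_indicator add: nn_integral_distr)
    also have "\<dots> = (\<integral>\<^sup>+\<omega>. emeasure (K (MI \<omega>, C \<omega>)) E \<partial>M)"
      using cond_distr_kernel_nn_integral[OF K(1), of E "\<lambda>_. 1"] by simp
    also have "\<dots> = integral\<^sup>N (distr M borel (\<lambda>\<omega>. (MI \<omega>, C \<omega>))) (\<lambda>z. emeasure (K z) E)"
      by (simp add: nn_integral_distr)
    also have "\<dots> = (\<integral>\<^sup>+\<omega>. emeasure (K (M0 \<omega>, C \<omega>)) E \<partial>M)"
      unfolding law by (simp add: nn_integral_distr)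
    finally show ?thesis .
  qed
  with K(2) show ?thesis using that by blast
qed

lemma (in prob_space) organic_outcome_distr_reweight:
  fixes C :: "'a \<Rightarrow> 'c::euclidean_space" and M0 M1 MI :: "'a \<Rightarrow> 'm::euclidean_space"
    and Y1 YI :: "'a \<Rightarrow> real"
  assumes org: "organic M C M0 M1 Y1 MI YI"
    and [measurable]: "C \<in> borel_measurable M" "M0 \<in> borel_measurable M" "M1 \<in> borel_measurable M"
      "MI \<in> borel_measurable M" "Y1 \<in> borel_measurable M" "YI \<in> borel_measurable M"
      "\<rho> \<in> borel_measurable borel"
    and dens: "distr M borel (\<lambda>\<omega>. (M0 \<omega>, C \<omega>)) = density (distr M borel (\<lambda>\<omega>. (M1 \<omega>, C \<omega>))) \<rho>"
  shows "distr M borel YI = distr (density M (\<lambda>\<omega>. \<rho> (M1 \<omega>, C \<omega>))) borel Y1"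
proof -
  obtain K where K: "cond_distr_kernel M (\<lambda>\<omega>. (M1 \<omega>, C \<omega>)) borel Y1 borel K"
    and g_formula: "\<And>E. E \<in> sets borel \<Longrightarrow>
      emeasure (distr M borel YI) E = (\<integral>\<^sup>+\<omega>. emeasure (K (M0 \<omega>, C \<omega>)) E \<partial>M)"
    by (rule organic_g_formula[OF org]) simp_all
  show ?thesis
  proof (rule measure_eqI)
    fix E assume "E \<in> sets (distr M borel YI)"
    then have [measurable]: "E \<in> sets borel" by simp
    show "emeasure (distr M borel YI) E = emeasure (distr (density M (\<lambda>\<omega>. \<rho> (M1 \<omega>, C \<omega>))) borel Y1) E"
      by (simp add: g_formula nn_integral_kernel_reweight[OF K _ _ _ _ _ dens]
          emeasure_distr_density_eq_nn_integral mult.commute)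
  qed simp
qed

lemma (in prob_space) organic_outcome_distr_reweight_not_common_cause:
  fixes C :: "'a \<Rightarrow> 'c::euclidean_space" and D :: "'a \<Rightarrow> 'd::euclidean_space"
    and M0 M1 MI :: "'a \<Rightarrow> 'm::euclidean_space" and Y1 YI :: "'a \<Rightarrow> real"
  assumes org: "organic M C M0 M1 Y1 MI YI" and ncc: "not_common_cause M D C M0 M1 Y1"
    and [measurable]: "C \<in> borel_measurable M" "D \<in> borel_measurable M" "M0 \<in> borel_measurable M"
      "M1 \<in> borel_measurable M" "MI \<in> borel_measurable M" "Y1 \<in> borel_measurable M"
      "YI \<in> borel_measurable M" "\<rho> \<in> borel_measurable borel"
    and dens: "distr M borel (\<lambda>\<omega>. ((M0 \<omega>, C \<omega>), D \<omega>)) =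
      density (distr M borel (\<lambda>\<omega>. ((M1 \<omega>, C \<omega>), D \<omega>))) \<rho>"
  shows "distr M borel YI = distr (density M (\<lambda>\<omega>. \<rho> ((M1 \<omega>, C \<omega>), D \<omega>))) borel Y1"
proof -
  obtain K where K: "cond_distr_kernel M (\<lambda>\<omega>. (M1 \<omega>, C \<omega>)) borel Y1 borel K"
    and g_formula: "\<And>E. E \<in> sets borel \<Longrightarrow>
      emeasure (distr M borel YI) E = (\<integral>\<^sup>+\<omega>. emeasure (K (M0 \<omega>, C \<omega>)) E \<partial>M)"
    by (rule organic_g_formula[OF org]) simp_all
  have reweight: "(\<integral>\<^sup>+\<omega>. emeasure (K (M0 \<omega>, C \<omega>)) E \<partial>M) =
      (\<integral>\<^sup>+\<omega>. \<rho> ((M1 \<omega>, C \<omega>), D \<omega>) * indicator E (Y1 \<omega>) \<partial>M)"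
    if [measurable]: "E \<in> sets borel" for E
    using ncc unfolding not_common_cause_def
  proof (elim disjE conjE)
    assume "cond_indep M D borel M0 borel C borel" "cond_indep M D borel M1 borel C borel"
    then show ?thesis
      by (intro nn_integral_kernel_reweight_cond_indep_mediator[OF K _ _ _ _ _ _ _ _ _ dens]) simp_all
  next
    assume "cond_indep M D borel Y1 borel (\<lambda>\<omega>. (M1 \<omega>, C \<omega>)) borel"
    then show ?thesis
      by (intro nn_integral_kernel_reweight_cond_indep_outcome[OF K _ _ _ _ _ _ _ dens]) simp_all
  qed
  show ?thesis
  proof (rule measure_eqI)
    fix E assume "E \<in> sets (distr M borel YI)"
    then have [measurable]: "E \<in> sets borel" by simp
    show "emeasure (distr M borel YI) E =
        emeasure (distr (density M (\<lambda>\<omega>. \<rho> ((M1 \<omega>, C \<omega>), D \<omega>))) borel Y1) E"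
      by (simp add: g_formula reweight emeasure_distr_density_eq_nn_integral mult.commute)
  qed simp
qed

lemma (in prob_space) organic_outcome_distr_eq:
  fixes C :: "'a \<Rightarrow> 'c::euclidean_space" and M0 M1 MI MI' :: "'a \<Rightarrow> 'm::euclidean_space"
    and Y1 YI YI' :: "'a \<Rightarrow> real"
  assumes org: "organic M C M0 M1 Y1 MI YI" and org': "organic M C M0 M1 Y1 MI' YI'"
    and ac: "absolutely_continuous (distr M borel (\<lambda>\<omega>. (M1 \<omega>, C \<omega>))) (distr M borel (\<lambda>\<omega>. (M0 \<omega>, C \<omega>)))"
    and [measurable]: "C \<in> borel_measurable M" "M0 \<in> borel_measurable M" "M1 \<in> borel_measurable M"
      "MI \<in> borel_measurable M" "MI' \<in> borel_measurable M" "Y1 \<in> borel_measurable M"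
      "YI \<in> borel_measurable M" "YI' \<in> borel_measurable M"
  shows "distr M borel YI = distr M borel YI'"
proof -
  obtain \<rho> where [measurable]: "\<rho> \<in> borel_measurable borel"
    and dens: "distr M borel (\<lambda>\<omega>. (M0 \<omega>, C \<omega>)) = density (distr M borel (\<lambda>\<omega>. (M1 \<omega>, C \<omega>))) \<rho>"
    by (rule distr_density_exists[OF _ _ ac]) simp_all
  show ?thesis
    using organic_outcome_distr_reweight[OF org _ _ _ _ _ _ _ dens]
      organic_outcome_distr_reweight[OF org' _ _ _ _ _ _ _ dens]
    by simp
qed

lemma (in prob_space) organic_outcome_distr_eq_not_common_cause:
  fixes C :: "'a \<Rightarrow> 'c::euclidean_space" and Ct :: "'a \<Rightarrow> 'd::euclidean_space"
    and M0 M1 MI MI' :: "'a \<Rightarrow> 'm::euclidean_space" and Y1 YI YI' :: "'a \<Rightarrow> real"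
  assumes ncc: "not_common_cause M C Ct M0 M1 Y1" and ncc': "not_common_cause M Ct C M0 M1 Y1"
    and org: "organic M C M0 M1 Y1 MI YI" and org': "organic M Ct M0 M1 Y1 MI' YI'"
    and ac: "absolutely_continuous (distr M borel (\<lambda>\<omega>. (M1 \<omega>, C \<omega>, Ct \<omega>)))
      (distr M borel (\<lambda>\<omega>. (M0 \<omega>, C \<omega>, Ct \<omega>)))"
    and [measurable]: "C \<in> borel_measurable M" "Ct \<in> borel_measurable M" "M0 \<in> borel_measurable M"
      "M1 \<in> borel_measurable M" "MI \<in> borel_measurable M" "MI' \<in> borel_measurable M"
      "Y1 \<in> borel_measurable M" "YI \<in> borel_measurable M" "YI' \<in> borel_measurable M"
  shows "distr M borel YI = distr M borel YI'"
proof -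
  obtain \<rho> where [measurable]: "\<rho> \<in> borel_measurable borel"
    and dens: "distr M borel (\<lambda>\<omega>. (M0 \<omega>, C \<omega>, Ct \<omega>)) = density (distr M borel (\<lambda>\<omega>. (M1 \<omega>, C \<omega>, Ct \<omega>))) \<rho>"
    by (rule distr_density_exists[OF _ _ ac]) simp_all
  have dens_C: "distr M borel (\<lambda>\<omega>. ((M0 \<omega>, C \<omega>), Ct \<omega>)) =
      density (distr M borel (\<lambda>\<omega>. ((M1 \<omega>, C \<omega>), Ct \<omega>))) (\<lambda>y. \<rho> (fst (fst y), snd (fst y), snd y))"
    using distr_density_comp[OF _ _ _ _ _ _ dens, where a="\<lambda>x. ((fst x, fst (snd x)), snd (snd x))" and L=borel and \<rho>'="\<lambda>y. \<rho> (fst (fst y), snd (fst y), snd y)"]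
    by simp
  have law: "distr M borel YI = distr (density M (\<lambda>\<omega>. \<rho> (M1 \<omega>, C \<omega>, Ct \<omega>))) borel Y1"
    using organic_outcome_distr_reweight_not_common_cause[OF org ncc' _ _ _ _ _ _ _ _ dens_C] by simp
  have dens_Ct: "distr M borel (\<lambda>\<omega>. ((M0 \<omega>, Ct \<omega>), C \<omega>)) =
      density (distr M borel (\<lambda>\<omega>. ((M1 \<omega>, Ct \<omega>), C \<omega>))) (\<lambda>y. \<rho> (fst (fst y), snd y, snd (fst y)))"
    using distr_density_comp[OF _ _ _ _ _ _ dens, where a="\<lambda>x. ((fst x, snd (snd x)), fst (snd x))" and L=borel and \<rho>'="\<lambda>y. \<rho> (fst (fst y), snd y, snd (fst y))"]
    by simp
  have law': "distr M borel YI' = distr (density M (\<lambda>\<omega>. \<rho> (M1 \<omega>, C \<omega>, Ct \<omega>))) borel Y1"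
    using organic_outcome_distr_reweight_not_common_cause[OF org' ncc _ _ _ _ _ _ _ _ dens_Ct] by simp
  show ?thesis by (simp add: law law')
qed

theorem theorem5p2:
  fixes P :: "'a measure"
    and C :: "'a \<Rightarrow> 'c::euclidean_space"
    and Ct :: "'a \<Rightarrow> 'd::euclidean_space"
    and M0 M1 MI MI' :: "'a \<Rightarrow> 'm::euclidean_space"
    and Y0 Y1 YI YI' :: "'a \<Rightarrow> real"
  assumes "prob_space P"
    and "C \<in> borel_measurable P" and "Ct \<in> borel_measurable P"
    and "M0 \<in> borel_measurable P" and "M1 \<in> borel_measurable P"
    and "MI \<in> borel_measurable P" and "MI' \<in> borel_measurable P"
    and "integrable P Y0" and "integrable P Y1"
    and "integrable P YI" and "integrable P YI'"
  shows
    "(organic P C M0 M1 Y1 MI YI \<and> organic P C M0 M1 Y1 MI' YI' \<and>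
      absolutely_continuous (distr P borel (\<lambda>\<omega>. (M1 \<omega>, C \<omega>)))
                            (distr P borel (\<lambda>\<omega>. (M0 \<omega>, C \<omega>)))
      \<longrightarrow> (\<integral>\<omega>. YI \<omega> \<partial>P) = (\<integral>\<omega>. YI' \<omega> \<partial>P) \<and>
          (\<integral>\<omega>. YI \<omega> \<partial>P) - (\<integral>\<omega>. Y0 \<omega> \<partial>P) = (\<integral>\<omega>. YI' \<omega> \<partial>P) - (\<integral>\<omega>. Y0 \<omega> \<partial>P) \<and>
          (\<integral>\<omega>. Y1 \<omega> \<partial>P) - (\<integral>\<omega>. YI \<omega> \<partial>P) = (\<integral>\<omega>. Y1 \<omega> \<partial>P) - (\<integral>\<omega>. YI' \<omega> \<partial>P))
     \<and>
     (not_common_cause P C Ct M0 M1 Y1 \<and> not_common_cause P Ct C M0 M1 Y1 \<and>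
      organic P C M0 M1 Y1 MI YI \<and> organic P Ct M0 M1 Y1 MI' YI' \<and>
      absolutely_continuous (distr P borel (\<lambda>\<omega>. (M1 \<omega>, C \<omega>, Ct \<omega>)))
                            (distr P borel (\<lambda>\<omega>. (M0 \<omega>, C \<omega>, Ct \<omega>)))
      \<longrightarrow> (\<integral>\<omega>. YI \<omega> \<partial>P) = (\<integral>\<omega>. YI' \<omega> \<partial>P) \<and>
          (\<integral>\<omega>. YI \<omega> \<partial>P) - (\<integral>\<omega>. Y0 \<omega> \<partial>P) = (\<integral>\<omega>. YI' \<omega> \<partial>P) - (\<integral>\<omega>. Y0 \<omega> \<partial>P) \<and>
          (\<integral>\<omega>. Y1 \<omega> \<partial>P) - (\<integral>\<omega>. YI \<omega> \<partial>P) = (\<integral>\<omega>. Y1 \<omega> \<partial>P) - (\<integral>\<omega>. YI' \<omega> \<partial>P))"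
proof -
  interpret prob_space P by fact
  note [measurable] = assms(2-7)
  have [measurable]: "Y1 \<in> borel_measurable P" "YI \<in> borel_measurable P" "YI' \<in> borel_measurable P"
    using assms(9-11) by (simp_all add: borel_measurable_integrable)
  have same_mean: "(\<integral>\<omega>. YI \<omega> \<partial>P) = (\<integral>\<omega>. YI' \<omega> \<partial>P)" if "distr P borel YI = distr P borel YI'"
  proof -
    have "(\<integral>\<omega>. YI \<omega> \<partial>P) = (\<integral>x. x \<partial>distr P borel YI)"
      by (simp add: integral_distr)
    also have "\<dots> = (\<integral>\<omega>. YI' \<omega> \<partial>P)"
      unfolding that by (simp add: integral_distr)
    finally show ?thesis .
  qed
  have "(\<integral>\<omega>. YI \<omega> \<partial>P) = (\<integral>\<omega>. YI' \<omega> \<partial>P)"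
    if "organic P C M0 M1 Y1 MI YI" "organic P C M0 M1 Y1 MI' YI'"
      "absolutely_continuous (distr P borel (\<lambda>\<omega>. (M1 \<omega>, C \<omega>))) (distr P borel (\<lambda>\<omega>. (M0 \<omega>, C \<omega>)))"
    by (intro same_mean organic_outcome_distr_eq[OF that]) simp_all
  moreover have "(\<integral>\<omega>. YI \<omega> \<partial>P) = (\<integral>\<omega>. YI' \<omega> \<partial>P)"
    if "not_common_cause P C Ct M0 M1 Y1" "not_common_cause P Ct C M0 M1 Y1"
      "organic P C M0 M1 Y1 MI YI" "organic P Ct M0 M1 Y1 MI' YI'"
      "absolutely_continuous (distr P borel (\<lambda>\<omega>. (M1 \<omega>, C \<omega>, Ct \<omega>)))
        (distr P borel (\<lambda>\<omega>. (M0 \<omega>, C \<omega>, Ct \<omega>)))"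
    by (intro same_mean organic_outcome_distr_eq_not_common_cause[OF that]) simp_all
  ultimately show ?thesis by auto
qed

end
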